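(* Let $\lambda$ be a partition with $n$ parts, let $\beta \in UBP_\lambda(n)$, and set $\delta := \Delta_\lambda(\beta)$. Let $\pi$ be a permutation of $[n]$ and let $\Lambda = (\Lambda_1,\dots,\Lambda_n) \in \mathcal{LD}_\lambda(\beta;\pi)$. Then for each $m \in [n]$ the component $\Lambda_m$ passes through the point $(\lambda_{\pi_m} + n - \pi_m, \delta_{\pi_m})$ and from there proceeds only by southerly steps to its endpoint $(\lambda_{\pi_m} + n - \pi_m, \beta_{\pi_m})$.
   Context: Fix an integer $n \geq 1$ and write $[k] = \{1,\dots,k\}$. A partition is $\lambda = (\lambda_1,\dots,\lambda_n)$ with $\lambda_1 \geq \dots \geq \lambda_n \geq 0$ integers. Let $R_\lambda \subseteq [n-1]$ be the set of $q \in [n-1]$ with $\lambda_q > \lambda_{q+1}$; write its elements $q_1 < \dots < q_r$, and set $q_0 := 0$, $q_{r+1} := n$. For $h \in [r+1]$ the $h$-th carrel is the index interval $\{q_{h-1}+1,\dots,q_h\}$. A $\lambda$-tuple is an $n$-tuple $\beta$ with entries in $[n]$, considered with this carrel structure; it is upper if $\beta_i \geq i$ for all $i$. $U_\lambda(n)$ is the set of upper $\lambda$-tuples. Critical indices: for $\beta \in U_\lambda(n)$ and $h \in [r+1]$, set $x_1 := q_h$; given $x_{u-1}$, if some index $x$ with $q_{h-1} < x < x_{u-1}$ satisfies $\beta_{x_{u-1}} - \beta_x > x_{u-1} - x$, let $x_u$ be the largest such $x$, otherwise stop. The $x_u$ are the critical indices of $\beta$ in carrel $h$. For $i \in [n]$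 let $x(i)$ be the smallest critical index in the carrel of $i$ with $x(i) \geq i$. The $\lambda$-core is $\Delta_\lambda(\beta) := \delta$ with $\delta_i := \beta_{x(i)} - (x(i)-i)$, and the $\lambda$-platform is $\Xi_\lambda(\beta) := \xi$ with $\xi_i := \beta_{x(i)}$. $UBP_\lambda(n)$ is the set of $\beta \in U_\lambda(n)$ with $\beta_i \leq \Xi_\lambda(\beta)_i$ for all $i$. Lattice paths: lattice points are integer pairs $(a,b)$ with $a \geq 0$, $b \geq 1$. A lattice path is a sequence of lattice points each consecutive step of which is an easterly step $(a,b) \to (a+1,b)$ or a southerly step $(a,b) \to (a,b+1)$. An $n$-path is $(\Lambda_1,\dots,\Lambda_n)$ with $\Lambda_m$ a lattice path starting at $(n-m,m)$. The terminals of $(\lambda,\beta)$ are $P_m := (\lambda_m + n - m, \beta_m)$, $m \in [n]$. For a permutation $\pi$ of $[n]$, $\mathcal{LD}_\lambda(\beta;\pi)$ is the set of $n$-paths with $\Lambda_m$ ending at $P_{\pi_m}$ for every $m$ and no two distinct components sharing a lattice point. *)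

theory Defs
  imports Main "HOL-Combinatorics.Permutations"
begin

text \<open>Indices run over {1..n}; a partition / tuple is a function nat => nat
  whose values at indices 1..n are the entries.\<close>

definition is_partition :: "nat \<Rightarrow> (nat \<Rightarrow> nat) \<Rightarrow> bool" where
  "is_partition n lam \<longleftrightarrow> (\<forall>i. 1 \<le> i \<and> i < n \<longrightarrow> lam (Suc i) \<le> lam i)"

definition R_set :: "nat \<Rightarrow> (nat \<Rightarrow> nat) \<Rightarrow> nat set" where
  "R_set n lam = {q. 1 \<le> q \<and> q \<le> n - 1 \<and> lam q > lam (Suc q)}"

text \<open>Left boundary q_{h-1} and right boundary q_h of the carrel containing index i.\<close>
definition carrel_lo :: "nat \<Rightarrow> (nat \<Rightarrow> nat) \<Rightarrow> nat \<Rightarrow> nat" where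
  "carrel_lo n lam i = Max ({0} \<union> {q \<in> R_set n lam. q < i})"

definition carrel_hi :: "nat \<Rightarrow> (nat \<Rightarrow> nat) \<Rightarrow> nat \<Rightarrow> nat" where
  "carrel_hi n lam i = Min ({n} \<union> {q \<in> R_set n lam. i \<le> q})"

definition is_lambda_tuple :: "nat \<Rightarrow> (nat \<Rightarrow> nat) \<Rightarrow> bool" where
  "is_lambda_tuple n beta \<longleftrightarrow> (\<forall>i. 1 \<le> i \<and> i \<le> n \<longrightarrow> 1 \<le> beta i \<and> beta i \<le> n)"

definition U_set :: "nat \<Rightarrow> (nat \<Rightarrow> nat) set" where
  "U_set n = {beta. is_lambda_tuple n beta \<and> (\<forall>i. 1 \<le> i \<and> i \<le> n \<longrightarrow> i \<le> beta i)}"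

text \<open>Candidates for the next critical index below x (lo is q_{h-1}).\<close>
definition crit_cands :: "(nat \<Rightarrow> nat) \<Rightarrow> nat \<Rightarrow> nat \<Rightarrow> nat set" where
  "crit_cands beta lo x =
     {y. lo < y \<and> y < x \<and> int (beta x) - int (beta y) > int x - int y}"

inductive_set crit_set :: "(nat \<Rightarrow> nat) \<Rightarrow> nat \<Rightarrow> nat \<Rightarrow> nat set"
  for beta :: "nat \<Rightarrow> nat" and lo :: nat and hi :: nat where
  start: "hi \<in> crit_set beta lo hi"
| step: "x \<in> crit_set beta lo hi \<Longrightarrow> crit_cands beta lo x \<noteq> {}
         \<Longrightarrow> Max (crit_cands beta lo x) \<in> crit_set beta lo hi"

definition crit_of :: "nat \<Rightarrow> (nat \<Rightarrow> nat) \<Rightarrow> (nat \<Rightarrow> nat) \<Rightarrow> nat \<Rightarrow> nat" where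
  "crit_of n lam beta i =
     Min {x \<in> crit_set beta (carrel_lo n lam i) (carrel_hi n lam i). i \<le> x}"

definition core :: "nat \<Rightarrow> (nat \<Rightarrow> nat) \<Rightarrow> (nat \<Rightarrow> nat) \<Rightarrow> nat \<Rightarrow> int" where
  "core n lam beta i =
     int (beta (crit_of n lam beta i)) - (int (crit_of n lam beta i) - int i)"

definition platform :: "nat \<Rightarrow> (nat \<Rightarrow> nat) \<Rightarrow> (nat \<Rightarrow> nat) \<Rightarrow> nat \<Rightarrow> nat" where
  "platform n lam beta i = beta (crit_of n lam beta i)"

definition UBP_set :: "nat \<Rightarrow> (nat \<Rightarrow> nat) \<Rightarrow> (nat \<Rightarrow> nat) set" where
  "UBP_set n lam = {beta \<in> U_set n. \<forall>i. 1 \<le> i \<and> i \<le> n \<longrightarrow> beta i \<le> platform n lam beta i}"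

definition lattice_point :: "nat \<times> nat \<Rightarrow> bool" where
  "lattice_point p \<longleftrightarrow> 1 \<le> snd p"

definition is_step :: "nat \<times> nat \<Rightarrow> nat \<times> nat \<Rightarrow> bool" where
  "is_step p p' \<longleftrightarrow> p' = (Suc (fst p), snd p) \<or> p' = (fst p, Suc (snd p))"

definition lattice_path :: "(nat \<times> nat) list \<Rightarrow> bool" where
  "lattice_path L \<longleftrightarrow> L \<noteq> [] \<and> (\<forall>p \<in> set L. lattice_point p) \<and>
     (\<forall>j. Suc j < length L \<longrightarrow> is_step (L ! j) (L ! Suc j))"

definition n_path :: "nat \<Rightarrow> (nat \<Rightarrow> (nat \<times> nat) list) \<Rightarrow> bool" where
  "n_path n Lam \<longleftrightarrow> (\<forall>m. 1 \<le> m \<and> m \<le> n \<longrightarrow>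
     lattice_path (Lam m) \<and> hd (Lam m) = (n - m, m))"

definition terminal :: "nat \<Rightarrow> (nat \<Rightarrow> nat) \<Rightarrow> (nat \<Rightarrow> nat) \<Rightarrow> nat \<Rightarrow> nat \<times> nat" where
  "terminal n lam beta m = (lam m + n - m, beta m)"

definition LD_set :: "nat \<Rightarrow> (nat \<Rightarrow> nat) \<Rightarrow> (nat \<Rightarrow> nat) \<Rightarrow> (nat \<Rightarrow> nat)
    \<Rightarrow> (nat \<Rightarrow> (nat \<times> nat) list) set" where
  "LD_set n lam beta pi = {Lam. n_path n Lam \<and>
     (\<forall>m. 1 \<le> m \<and> m \<le> n \<longrightarrow> last (Lam m) = terminal n lam beta (pi m)) \<and>
     (\<forall>m m'. 1 \<le> m \<and> m \<le> n \<and> 1 \<le> m' \<and> m' \<le> n \<and> m \<noteq> m' \<longrightarrow>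
        set (Lam m) \<inter> set (Lam m') = {})}"

end

theory Submission imports Defs begin

text \<open>
  Let \<open>x\<close> be the critical index of \<open>\<pi>\<^sub>m\<close>. On \<open>\<pi>\<^sub>m \<le> j \<le> x\<close> the partition is
  constant, \<open>\<beta>\<^sub>j \<le> \<beta>\<^sub>x\<close> (upper-bounded by the platform) and \<open>\<beta>\<^sub>x - \<beta>\<^sub>j \<le> x - j\<close>
  (no further critical index). So the terminals \<open>P\<^sub>j\<close> sit in consecutive columns,
  each weakly below the antidiagonal through \<open>P\<^sub>x\<close>, and the paths ending there
  cross that antidiagonal left of their terminals. Going down from \<open>j = x\<close>, the path
  ending at \<open>P\<^sub>j\<close> cannot cross it in a column belonging to some \<open>j' > j\<close>, as that
  point is already used by the path ending at \<open>P\<^sub>j\<^sub>'\<close>; so it crosses in its own column,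
  at height \<open>\<beta>\<^sub>x - (x - j) = \<delta>\<^sub>j\<close>, and from there can only go south.
\<close>

lemma lattice_path_nth_sum:
  assumes "lattice_path L" "k < length L"
  shows "fst (L ! k) + snd (L ! k) = fst (hd L) + snd (hd L) + k"
  using assms(2)
proof (induction k)
  case 0
  then show ?case using assms(1) by (simp add: lattice_path_def hd_conv_nth)
next
  case (Suc k)
  then have "is_step (L ! k) (L ! Suc k)" using assms(1) unfolding lattice_path_def by blast
  then show ?case using Suc by (auto simp: is_step_def)
qed

lemma lattice_path_nth_mono:
  assumes "lattice_path L" "k \<le> k'" "k' < length L"
  shows "fst (L ! k) \<le> fst (L ! k') \<and> snd (L ! k) \<le> snd (L ! k')"
  using assms(2,3)
proof (induction k' rule: dec_induct)
  case base
  then show ?case by simp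
next
  case (step k')
  then have "is_step (L ! k') (L ! Suc k')" using assms(1) unfolding lattice_path_def by blast
  then show ?case using step by (auto simp: is_step_def)
qed

lemma lattice_path_last: "lattice_path L \<Longrightarrow> last L = L ! (length L - 1)"
  by (simp add: lattice_path_def last_conv_nth)

lemma lattice_path_last_sum:
  assumes "lattice_path L"
  shows "fst (last L) + snd (last L) = fst (hd L) + snd (hd L) + (length L - 1)"
proof -
  have "L \<noteq> []" using assms by (simp add: lattice_path_def)
  then show ?thesis
    using lattice_path_nth_sum[OF assms, of "length L - 1"] by (simp add: lattice_path_last[OF assms])
qed

lemma lattice_path_le_last:
  assumes "lattice_path L" "k < length L"
  shows "fst (L ! k) \<le> fst (last L) \<and> snd (L ! k) \<le> snd (last L)"
  using lattice_path_nth_mono[OF assms(1), of k "length L - 1"] assms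
  by (simp add: lattice_path_last)

lemma lattice_path_south_in_last_column:
  assumes "lattice_path L" "k < length L" "fst (L ! k) = fst (last L)"
  shows "\<forall>j. k \<le> j \<and> Suc j < length L \<longrightarrow> L ! Suc j = (fst (L ! j), Suc (snd (L ! j)))"
proof (intro allI impI)
  fix j assume j: "k \<le> j \<and> Suc j < length L"
  have "is_step (L ! j) (L ! Suc j)" using assms(1) j unfolding lattice_path_def by blast
  moreover have "fst (L ! k) \<le> fst (L ! j)" using lattice_path_nth_mono[OF assms(1), of k j] j by auto
  moreover have "fst (L ! Suc j) \<le> fst (last L)" using lattice_path_le_last[OF assms(1)] j by blast
  ultimately show "L ! Suc j = (fst (L ! j), Suc (snd (L ! j)))"
    using assms(3) by (auto simp: is_step_def)
qed

lemma disjoint_lattice_paths_cross_antidiagonal: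
  fixes P :: "nat \<Rightarrow> (nat \<times> nat) list" and e :: "nat \<Rightarrow> nat"
  assumes paths: "\<And>j. j \<in> {i..x} \<Longrightarrow> lattice_path (P j)"
    and starts: "\<And>j. j \<in> {i..x} \<Longrightarrow> fst (hd (P j)) + snd (hd (P j)) = s"
    and ends: "\<And>j. j \<in> {i..x} \<Longrightarrow> last (P j) = (a + (x - j), e j)"
    and disjoint: "\<And>j j'. j \<in> {i..x} \<Longrightarrow> j' \<in> {i..x} \<Longrightarrow> j \<noteq> j' \<Longrightarrow> set (P j) \<inter> set (P j') = {}"
    and below: "\<And>j. j \<in> {i..x} \<Longrightarrow> e j \<le> e x"
    and slope: "\<And>j. j \<in> {i..x} \<Longrightarrow> e x \<le> e j + (x - j)"
    and "s \<le> a + e x"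
    and "j \<in> {i..x}"
  shows "a + e x - s < length (P j) \<and> P j ! (a + e x - s) = (a + (x - j), e x - (x - j))"
  using \<open>j \<in> {i..x}\<close>
proof (induction "x - j" arbitrary: j rule: less_induct)
  case less
  define k where "k = a + e x - s"
  have "a + (x - j) + e j = s + (length (P j) - 1)"
    using lattice_path_last_sum[OF paths[OF less.prems]] starts[OF less.prems] ends[OF less.prems]
    by simp
  moreover have "0 < length (P j)" using paths[OF less.prems] by (simp add: lattice_path_def)
  ultimately have k_len: "k < length (P j)"
    using slope[OF less.prems] \<open>s \<le> a + e x\<close> unfolding k_def by linarith
  obtain c b where cb: "P j ! k = (c, b)" by fastforce
  have diag: "c + b = a + e x"
    using lattice_path_nth_sum[OF paths[OF less.prems] k_len] starts[OF less.prems] cb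
      \<open>s \<le> a + e x\<close> unfolding k_def by simp
  have c_le: "c \<le> a + (x - j)" and b_le: "b \<le> e j"
    using lattice_path_le_last[OF paths[OF less.prems] k_len] ends[OF less.prems] cb by auto
  have c_eq: "c = a + (x - j)"
  proof (rule ccontr)
    assume "c \<noteq> a + (x - j)"
    define j' where "j' = x + a - c"
    have j': "j' \<in> {i..x}" "j < j'" "c = a + (x - j')"
      using c_le \<open>c \<noteq> _\<close> diag b_le below[OF less.prems] less.prems unfolding j'_def by auto
    have "k < length (P j') \<and> P j' ! k = (a + (x - j'), e x - (x - j'))"
      using less.hyps[of j'] j' unfolding k_def by auto
    moreover have "(a + (x - j'), e x - (x - j')) = (c, b)" using j'(3) diag by auto
    ultimately have "(c, b) \<in> set (P j')" by (metis nth_mem)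
    moreover have "(c, b) \<in> set (P j)" using cb k_len by (metis nth_mem)
    ultimately show False using disjoint[OF less.prems j'(1)] j'(2) by blast
  qed
  then show ?case using k_len cb diag unfolding k_def by auto
qed

lemma R_set_finite: "finite (R_set n lam)"
  by (rule finite_subset[of _ "{..n}"]) (auto simp: R_set_def)

lemma carrel_lo_less: "1 \<le> i \<Longrightarrow> carrel_lo n lam i < i"
  unfolding carrel_lo_def using R_set_finite[of n lam] by (subst Max_less_iff) auto

lemma carrel_hi_bounds: "i \<le> n \<Longrightarrow> i \<le> carrel_hi n lam i \<and> carrel_hi n lam i \<le> n"
  unfolding carrel_hi_def using R_set_finite[of n lam] by (auto simp: Min_ge_iff)

lemma carrel_hi_le_R_set: "q \<in> R_set n lam \<Longrightarrow> i \<le> q \<Longrightarrow> carrel_hi n lam i \<le> q"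
  unfolding carrel_hi_def using R_set_finite[of n lam] by (intro Min_le) auto

lemma carrel_hi_cases: "carrel_hi n lam i = n \<or> carrel_hi n lam i \<in> R_set n lam \<and> i \<le> carrel_hi n lam i"
proof -
  have "carrel_hi n lam i \<in> {n} \<union> {q \<in> R_set n lam. i \<le> q}"
    unfolding carrel_hi_def using R_set_finite[of n lam] by (intro Min_in) auto
  then show ?thesis by auto
qed

lemma carrel_lo_eq:
  assumes "i \<le> j" "j \<le> carrel_hi n lam i"
  shows "carrel_lo n lam j = carrel_lo n lam i"
proof -
  have "{q \<in> R_set n lam. q < j} = {q \<in> R_set n lam. q < i}"
    using carrel_hi_le_R_set[of _ n lam i] assms by fastforce
  then show ?thesis unfolding carrel_lo_def by simp
qed

lemma carrel_hi_eq:
  assumes "i \<le> j" "j \<le> carrel_hi n lam i" "j \<le> n"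
  shows "carrel_hi n lam j = carrel_hi n lam i"
proof (rule antisym)
  show "carrel_hi n lam j \<le> carrel_hi n lam i"
    using carrel_hi_cases[of n lam i] carrel_hi_le_R_set[of _ n lam j] carrel_hi_bounds[of j n lam] assms
    by auto
  show "carrel_hi n lam i \<le> carrel_hi n lam j"
    using carrel_hi_cases[of n lam j] carrel_hi_le_R_set[of _ n lam i] carrel_hi_bounds[of i n lam] assms
    by auto
qed

lemma partition_const_in_carrel:
  assumes "is_partition n lam" "1 \<le> i" "i \<le> j" "j \<le> k" "k \<le> carrel_hi n lam i" "k \<le> n"
  shows "lam j = lam k"
  using assms(4)
proof (induction j rule: inc_induct)
  case (step q)
  have q: "1 \<le> q" "q < n" "q < carrel_hi n lam i" using step assms by auto
  then have "\<not> lam (Suc q) < lam q" using carrel_hi_le_R_set[of q n lam i] assms(3) step(1)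
    unfolding R_set_def by fastforce
  moreover have "lam (Suc q) \<le> lam q" using assms(1) q unfolding is_partition_def by auto
  ultimately show ?case using step.IH by simp
qed simp

lemma crit_cands_finite: "finite (crit_cands beta lo x)"
  by (rule finite_subset[of _ "{..<x}"]) (auto simp: crit_cands_def)

lemma crit_set_bounds:
  assumes "y \<in> crit_set beta lo hi" "lo < hi"
  shows "lo < y \<and> y \<le> hi"
  using assms(1)
proof (induction rule: crit_set.induct)
  case (step x)
  then show ?case
    using Max_in[OF crit_cands_finite[of beta lo x] step(2)] by (auto simp: crit_cands_def)
qed (use assms(2) in simp)

lemma crit_of_least:
  fixes beta lam :: "nat \<Rightarrow> nat"
  assumes "1 \<le> i" "i \<le> n"
  defines "C \<equiv> crit_set beta (carrel_lo n lam i) (carrel_hi n lam i)"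
  shows "crit_of n lam beta i \<in> C" "i \<le> crit_of n lam beta i"
    "crit_of n lam beta i \<le> carrel_hi n lam i"
    "\<And>y. y \<in> C \<Longrightarrow> i \<le> y \<Longrightarrow> crit_of n lam beta i \<le> y"
proof -
  have lohi: "carrel_lo n lam i < i" "i \<le> carrel_hi n lam i"
    using carrel_lo_less[OF assms(1)] carrel_hi_bounds[OF assms(2)] by auto
  have bounds: "\<And>y. y \<in> C \<Longrightarrow> y \<le> carrel_hi n lam i"
    using crit_set_bounds lohi unfolding C_def by fastforce
  have fin: "finite {y \<in> C. i \<le> y}" by (rule finite_subset[of _ "{..carrel_hi n lam i}"]) (use bounds in auto)
  have "carrel_hi n lam i \<in> {y \<in> C. i \<le> y}" using lohi by (simp add: C_def crit_set.start)
  then have "crit_of n lam beta i \<in> {y \<in> C. i \<le> y}"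
    using Min_in[OF fin] unfolding crit_of_def C_def by blast
  then show "crit_of n lam beta i \<in> C" "i \<le> crit_of n lam beta i"
    "crit_of n lam beta i \<le> carrel_hi n lam i" using bounds by auto
  show "\<And>y. y \<in> C \<Longrightarrow> i \<le> y \<Longrightarrow> crit_of n lam beta i \<le> y"
    using Min_le[OF fin] unfolding crit_of_def C_def by blast
qed

lemma crit_of_eq:
  assumes "1 \<le> i" "i \<le> n" "i \<le> j" "j \<le> crit_of n lam beta i"
  shows "crit_of n lam beta j = crit_of n lam beta i"
proof -
  note x = crit_of_least[OF assms(1,2), where beta=beta and lam=lam]
  have "j \<le> carrel_hi n lam i" using x(3) assms by linarith
  moreover have "carrel_hi n lam i \<le> n" using carrel_hi_bounds[OF assms(2)] by blast
  ultimately have same: "carrel_lo n lam j = carrel_lo n lam i" "carrel_hi n lam j = carrel_hi n lam i"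
    using carrel_lo_eq carrel_hi_eq assms(3) by auto
  have "1 \<le> j" "j \<le> n" using assms \<open>j \<le> carrel_hi n lam i\<close> \<open>carrel_hi n lam i \<le> n\<close> by auto
  note y = crit_of_least[OF this, where beta=beta and lam=lam, unfolded same]
  show ?thesis using x y assms by (meson antisym order_trans)
qed

lemma crit_of_no_candidate:
  assumes "1 \<le> i" "i \<le> n" "i \<le> j" "j \<le> crit_of n lam beta i"
  shows "beta (crit_of n lam beta i) \<le> beta j + (crit_of n lam beta i - j)"
proof (rule ccontr)
  define x where "x = crit_of n lam beta i"
  define lo where "lo = carrel_lo n lam i"
  define hi where "hi = carrel_hi n lam i"
  note x = crit_of_least[OF assms(1,2), where beta=beta and lam=lam, folded x_def lo_def hi_def]
  assume "\<not> ?thesis"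
  then have "\<not> beta x \<le> beta j + (x - j)" unfolding x_def .
  moreover have "j \<le> x" using assms(4) unfolding x_def .
  ultimately have "j < x" "\<not> beta x \<le> beta j + (x - j)" by (auto simp: le_less)
  moreover have "lo < j" using carrel_lo_less[OF assms(1), of n lam] assms(3) unfolding lo_def by linarith
  ultimately have j: "j \<in> crit_cands beta lo x" unfolding crit_cands_def by auto
  let ?y = "Max (crit_cands beta lo x)"
  have "?y \<in> crit_set beta lo hi" using crit_set.step[OF x(1)] j by blast
  moreover have "j \<le> ?y" using Max_ge[OF crit_cands_finite j] .
  ultimately have "x \<le> ?y" using x(4) assms(3) by auto
  moreover have "?y \<in> crit_cands beta lo x" using Max_in[OF crit_cands_finite] j by blast
  ultimately show False by (simp add: crit_cands_def)
qed

lemma UBP_set_le_at_crit_of: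
  assumes "beta \<in> UBP_set n lam" "1 \<le> i" "i \<le> n" "i \<le> j" "j \<le> crit_of n lam beta i"
  shows "beta j \<le> beta (crit_of n lam beta i)"
proof -
  have "crit_of n lam beta i \<le> n"
    using crit_of_least(3)[OF assms(2,3)] carrel_hi_bounds[OF assms(3)] by (meson order_trans)
  then have "beta j \<le> platform n lam beta j" using assms by (auto simp: UBP_set_def)
  then show ?thesis using crit_of_eq[OF assms(2-5)] by (simp add: platform_def)
qed

lemma LD_set_paths_by_terminal:
  assumes "Lam \<in> LD_set n lam beta pi" "pi permutes {1..n}"
  shows "\<And>j. j \<in> {1..n} \<Longrightarrow> lattice_path (Lam (inv pi j))"
    "\<And>j. j \<in> {1..n} \<Longrightarrow> fst (hd (Lam (inv pi j))) + snd (hd (Lam (inv pi j))) = n"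
    "\<And>j. j \<in> {1..n} \<Longrightarrow> last (Lam (inv pi j)) = terminal n lam beta j"
    "\<And>j j'. j \<in> {1..n} \<Longrightarrow> j' \<in> {1..n} \<Longrightarrow> j \<noteq> j' \<Longrightarrow>
       set (Lam (inv pi j)) \<inter> set (Lam (inv pi j')) = {}"
proof -
  have inv: "inv pi j \<in> {1..n}" "pi (inv pi j) = j" if "j \<in> {1..n}" for j
    using permutes_in_image[OF permutes_inv[OF assms(2)]] permutes_inverses(1)[OF assms(2)] that
    by auto
  have np: "\<And>m. 1 \<le> m \<and> m \<le> n \<Longrightarrow> lattice_path (Lam m) \<and> hd (Lam m) = (n - m, m)"
    and ends: "\<And>m. 1 \<le> m \<and> m \<le> n \<Longrightarrow> last (Lam m) = terminal n lam beta (pi m)"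
    and disj: "\<And>m m'. 1 \<le> m \<and> m \<le> n \<and> 1 \<le> m' \<and> m' \<le> n \<and> m \<noteq> m' \<Longrightarrow>
        set (Lam m) \<inter> set (Lam m') = {}"
    using assms(1) unfolding LD_set_def n_path_def by blast+
  fix j j' assume j: "j \<in> {1..n}"
  show "lattice_path (Lam (inv pi j))" using np inv(1)[OF j] by simp
  show "fst (hd (Lam (inv pi j))) + snd (hd (Lam (inv pi j))) = n" using np inv(1)[OF j] by simp
  show "last (Lam (inv pi j)) = terminal n lam beta j" using ends inv[OF j] by simp
  assume "j' \<in> {1..n}" "j \<noteq> j'"
  then show "set (Lam (inv pi j)) \<inter> set (Lam (inv pi j')) = {}"
    using disj inv[OF j] inv[of j'] by (metis atLeastAtMost_iff)
qed

lemma crit_of_segment: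
  fixes beta lam :: "nat \<Rightarrow> nat"
  assumes "is_partition n lam" "beta \<in> UBP_set n lam" "1 \<le> i" "i \<le> n"
  defines "x \<equiv> crit_of n lam beta i"
  shows "i \<le> x" "x \<le> n" "x \<le> beta x"
    "\<And>j. j \<in> {i..x} \<Longrightarrow> lam j = lam x"
    "\<And>j. j \<in> {i..x} \<Longrightarrow> beta j \<le> beta x"
    "\<And>j. j \<in> {i..x} \<Longrightarrow> beta x \<le> beta j + (x - j)"
proof -
  have x: "i \<le> x" "x \<le> carrel_hi n lam i" "carrel_hi n lam i \<le> n"
    using crit_of_least(2,3)[OF assms(3,4)] carrel_hi_bounds[OF assms(4)] unfolding x_def by auto
  then show "i \<le> x" "x \<le> n" by simp_all
  show "x \<le> beta x" using assms(2-4) x by (auto simp: UBP_set_def U_set_def)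
  fix j assume "j \<in> {i..x}"
  then show "lam j = lam x" "beta j \<le> beta x" "beta x \<le> beta j + (x - j)"
    using partition_const_in_carrel[OF assms(1,3)] UBP_set_le_at_crit_of[OF assms(2-4)]
      crit_of_no_candidate[OF assms(3,4)] x unfolding x_def by auto
qed

lemma LD_set_path_meets_core:
  assumes "is_partition n lam" "beta \<in> UBP_set n lam" "pi permutes {1..n}"
    "Lam \<in> LD_set n lam beta pi" "i \<in> {1..n}"
  shows "\<exists>k < length (Lam (inv pi i)). Lam (inv pi i) ! k = (lam i + n - i, nat (core n lam beta i))"
proof -
  define x where "x = crit_of n lam beta i"
  have "1 \<le> i" "i \<le> n" using assms(5) by auto
  note seg = crit_of_segment[OF assms(1,2) this, folded x_def]
  note paths = LD_set_paths_by_terminal[OF assms(4,3)]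
  have sub: "\<And>j. j \<in> {i..x} \<Longrightarrow> j \<in> {1..n}" using assms(5) seg(2) by auto
  have ends: "last (Lam (inv pi j)) = (lam x + n - x + (x - j), beta j)" if "j \<in> {i..x}" for j
    using paths(3)[OF sub[OF that]] seg(2) seg(4)[OF that] that by (auto simp: terminal_def)
  have "n \<le> lam x + n - x + beta x" "i \<in> {i..x}" using assms(5) seg(1-3) by auto
  then have "Lam (inv pi i) ! (lam x + n - x + beta x - n) = (lam x + n - x + (x - i), beta x - (x - i))"
    and "lam x + n - x + beta x - n < length (Lam (inv pi i))"
    using disjoint_lattice_paths_cross_antidiagonal[where P = "\<lambda>j. Lam (inv pi j)" and s = n
        and a = "lam x + n - x" and e = beta and i = i and x = x and j = i,
        OF paths(1,2)[OF sub] ends paths(4)[OF sub sub] seg(5,6)] by auto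
  moreover have "lam x + n - x + (x - i) = lam i + n - i"
    using seg(1,2) seg(4)[OF \<open>i \<in> {i..x}\<close>] by auto
  moreover have "beta x - (x - i) = nat (core n lam beta i)"
    using seg(1,3) unfolding core_def x_def[symmetric] by auto
  ultimately show ?thesis by auto
qed

theorem lemma7p1:
  fixes n :: nat and lam beta pi :: "nat \<Rightarrow> nat"
    and Lam :: "nat \<Rightarrow> (nat \<times> nat) list"
  assumes "1 \<le> n"
    and "is_partition n lam"
    and "beta \<in> UBP_set n lam"
    and "pi permutes {1..n}"
    and "Lam \<in> LD_set n lam beta pi"
  shows "\<forall>m. 1 \<le> m \<and> m \<le> n \<longrightarrow>
    (\<exists>k < length (Lam m).
       Lam m ! k = (lam (pi m) + n - pi m, nat (core n lam beta (pi m))) \<and>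
       (\<forall>j. k \<le> j \<and> Suc j < length (Lam m) \<longrightarrow>
          Lam m ! Suc j = (fst (Lam m ! j), Suc (snd (Lam m ! j)))))"
proof (intro allI impI)
  fix m assume "1 \<le> m \<and> m \<le> n"
  then have i: "pi m \<in> {1..n}" and m: "inv pi (pi m) = m"
    using permutes_in_image[OF assms(4)] permutes_inverses(2)[OF assms(4)] by auto
  note paths = LD_set_paths_by_terminal[OF assms(5,4)]
  obtain k where k: "k < length (Lam m)"
    and at_core: "Lam m ! k = (lam (pi m) + n - pi m, nat (core n lam beta (pi m)))"
    using LD_set_path_meets_core[OF assms(2-5) i] unfolding m by blast
  have "fst (Lam m ! k) = fst (last (Lam m))"
    using at_core paths(3)[OF i] unfolding m by (simp add: terminal_def)
  then show "\<exists>k < length (Lam m).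
       Lam m ! k = (lam (pi m) + n - pi m, nat (core n lam beta (pi m))) \<and>
       (\<forall>j. k \<le> j \<and> Suc j < length (Lam m) \<longrightarrow>
          Lam m ! Suc j = (fst (Lam m ! j), Suc (snd (Lam m ! j))))"
    using lattice_path_south_in_last_column[OF paths(1)[OF i, unfolded m] k] k at_core by blast
qed

end
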